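(* Let $(X_i)_{i\in I}$ be a family of zero-dimensional coherent domains and $F\subseteq\prod_{i\in I}\mathcal V_{\le1}(X_i)\subseteq\prod_{i\in I}\mathcal V(X_i)$ a finite set. Then $\mathrm{conv}\,F$ is Lawson-compact in $\prod_{i\in I}\mathcal V(X_i)$.
   Context: A domain is a continuous dcpo; coherent means the intersection of two compact saturated subsets is compact; zero-dimensional means the Scott topology has a basis of clopens. $\mathcal V(X)$ is the set of continuous valuations on $X$ (strict, monotone, modular maps from Scott-opens to $[0,\infty]$ preserving directed unions), ordered pointwise, with pointwise addition and scaling; $\mathcal V_{\le1}(X)$ those with $\mu(X)\le1$. Products carry the componentwise order and operations. $\mathrm{conv}\,F$ denotes the set of finite convex combinations of elements of $F$. The Lawson topology is generated by the Scott-open sets and the complements of principal up-sets ${\uparrow}x$. *)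

theory Defs
  imports "HOL-Analysis.Analysis"
begin

definition poset_on :: "'a set \<Rightarrow> ('a \<Rightarrow> 'a \<Rightarrow> bool) \<Rightarrow> bool" where
  "poset_on S le \<longleftrightarrow>
     (\<forall>x\<in>S. le x x) \<and>
     (\<forall>x\<in>S. \<forall>y\<in>S. le x y \<and> le y x \<longrightarrow> x = y) \<and>
     (\<forall>x\<in>S. \<forall>y\<in>S. \<forall>z\<in>S. le x y \<and> le y z \<longrightarrow> le x z)"

definition directed_on :: "'a set \<Rightarrow> ('a \<Rightarrow> 'a \<Rightarrow> bool) \<Rightarrow> 'a set \<Rightarrow> bool" where
  "directed_on S le D \<longleftrightarrow> D \<noteq> {} \<and> D \<subseteq> S \<and>
     (\<forall>x\<in>D. \<forall>y\<in>D. \<exists>z\<in>D. le x z \<and> le y z)"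

definition is_lub_on :: "'a set \<Rightarrow> ('a \<Rightarrow> 'a \<Rightarrow> bool) \<Rightarrow> 'a set \<Rightarrow> 'a \<Rightarrow> bool" where
  "is_lub_on S le D s \<longleftrightarrow> s \<in> S \<and> (\<forall>d\<in>D. le d s) \<and>
     (\<forall>u\<in>S. (\<forall>d\<in>D. le d u) \<longrightarrow> le s u)"

definition dcpo_on :: "'a set \<Rightarrow> ('a \<Rightarrow> 'a \<Rightarrow> bool) \<Rightarrow> bool" where
  "dcpo_on S le \<longleftrightarrow> poset_on S le \<and>
     (\<forall>D. directed_on S le D \<longrightarrow> (\<exists>s. is_lub_on S le D s))"

definition way_below :: "'a set \<Rightarrow> ('a \<Rightarrow> 'a \<Rightarrow> bool) \<Rightarrow> 'a \<Rightarrow> 'a \<Rightarrow> bool" where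
  "way_below S le x y \<longleftrightarrow> x \<in> S \<and> y \<in> S \<and>
     (\<forall>D s. directed_on S le D \<longrightarrow> is_lub_on S le D s \<longrightarrow> le y s \<longrightarrow> (\<exists>d\<in>D. le x d))"

definition domain_on :: "'a set \<Rightarrow> ('a \<Rightarrow> 'a \<Rightarrow> bool) \<Rightarrow> bool" where
  "domain_on S le \<longleftrightarrow> dcpo_on S le \<and>
     (\<forall>y\<in>S. directed_on S le {x\<in>S. way_below S le x y} \<and>
             is_lub_on S le {x\<in>S. way_below S le x y} y)"

definition upper_set_on :: "'a set \<Rightarrow> ('a \<Rightarrow> 'a \<Rightarrow> bool) \<Rightarrow> 'a set \<Rightarrow> bool" where
  "upper_set_on S le U \<longleftrightarrow> U \<subseteq> S \<and> (\<forall>x\<in>U. \<forall>y\<in>S. le x y \<longrightarrow> y \<in> U)"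

definition scott_open :: "'a set \<Rightarrow> ('a \<Rightarrow> 'a \<Rightarrow> bool) \<Rightarrow> 'a set \<Rightarrow> bool" where
  "scott_open S le U \<longleftrightarrow> upper_set_on S le U \<and>
     (\<forall>D s. directed_on S le D \<longrightarrow> is_lub_on S le D s \<longrightarrow> s \<in> U \<longrightarrow> D \<inter> U \<noteq> {})"

definition scott_topology :: "'a set \<Rightarrow> ('a \<Rightarrow> 'a \<Rightarrow> bool) \<Rightarrow> 'a topology" where
  "scott_topology S le = topology_generated_by {U. scott_open S le U}"

definition up_on :: "'a set \<Rightarrow> ('a \<Rightarrow> 'a \<Rightarrow> bool) \<Rightarrow> 'a \<Rightarrow> 'a set" where
  "up_on S le x = {y\<in>S. le x y}"

definition lawson_topology :: "'a set \<Rightarrow> ('a \<Rightarrow> 'a \<Rightarrow> bool) \<Rightarrow> 'a topology" where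
  "lawson_topology S le = topology_generated_by
     ({U. scott_open S le U} \<union> {S - up_on S le x | x. x \<in> S})"

definition saturatedin :: "'a topology \<Rightarrow> 'a set \<Rightarrow> bool" where
  "saturatedin T K \<longleftrightarrow> K \<subseteq> topspace T \<and>
     K = topspace T \<inter> \<Inter>{U. openin T U \<and> K \<subseteq> U}"

definition coherent_top :: "'a topology \<Rightarrow> bool" where
  "coherent_top T \<longleftrightarrow> (\<forall>K L. compactin T K \<and> saturatedin T K \<and> compactin T L \<and> saturatedin T L
      \<longrightarrow> compactin T (K \<inter> L))"

definition zero_dimensional_top :: "'a topology \<Rightarrow> bool" where
  "zero_dimensional_top T \<longleftrightarrow> (\<exists>B. (\<forall>b\<in>B. openin T b \<and> closedin T b) \<and>
      (\<forall>U. openin T U \<longrightarrow> U = \<Union>{b\<in>B. b \<subseteq> U}))"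

text \<open>A continuous valuation on the Scott-open sets of (S, le), represented as a total function
  on sets which is 0 on non-Scott-open sets.\<close>
definition cont_valuation :: "'a set \<Rightarrow> ('a \<Rightarrow> 'a \<Rightarrow> bool) \<Rightarrow> ('a set \<Rightarrow> ennreal) \<Rightarrow> bool" where
  "cont_valuation S le \<mu> \<longleftrightarrow>
     (\<forall>U. \<not> scott_open S le U \<longrightarrow> \<mu> U = 0) \<and>
     \<mu> {} = 0 \<and>
     (\<forall>U V. scott_open S le U \<and> scott_open S le V \<and> U \<subseteq> V \<longrightarrow> \<mu> U \<le> \<mu> V) \<and>
     (\<forall>U V. scott_open S le U \<and> scott_open S le V \<longrightarrow> \<mu> U + \<mu> V = \<mu> (U \<union> V) + \<mu> (U \<inter> V)) \<and>
     (\<forall>\<D>. \<D> \<noteq> {} \<and> (\<forall>U\<in>\<D>. scott_open S le U) \<and>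
          (\<forall>U\<in>\<D>. \<forall>V\<in>\<D>. \<exists>W\<in>\<D>. U \<subseteq> W \<and> V \<subseteq> W)
          \<longrightarrow> \<mu> (\<Union>\<D>) = (SUP U\<in>\<D>. \<mu> U))"

text \<open>The product \<Prod>i\<in>I. V(X i), elements extensional (zero valuation outside I).\<close>
definition prod_val :: "'i set \<Rightarrow> ('i \<Rightarrow> 'a set) \<Rightarrow> ('i \<Rightarrow> 'a \<Rightarrow> 'a \<Rightarrow> bool)
    \<Rightarrow> ('i \<Rightarrow> 'a set \<Rightarrow> ennreal) set" where
  "prod_val I X R = {\<nu>. (\<forall>i\<in>I. cont_valuation (X i) (R i) (\<nu> i)) \<and> (\<forall>i. i \<notin> I \<longrightarrow> \<nu> i = (\<lambda>_. 0))}"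

definition prod_val_le :: "('i \<Rightarrow> 'a set \<Rightarrow> ennreal) \<Rightarrow> ('i \<Rightarrow> 'a set \<Rightarrow> ennreal) \<Rightarrow> bool" where
  "prod_val_le \<nu> \<nu>' \<longleftrightarrow> (\<forall>i U. \<nu> i U \<le> \<nu>' i U)"

definition conv_hull_val :: "('i \<Rightarrow> 'a set \<Rightarrow> ennreal) set \<Rightarrow> ('i \<Rightarrow> 'a set \<Rightarrow> ennreal) set" where
  "conv_hull_val F = {(\<lambda>i U. \<Sum>k<n. ennreal (c k) * g k i U) | (n::nat) (c::nat \<Rightarrow> real) g.
      (\<forall>k<n. g k \<in> F \<and> c k \<ge> 0) \<and> (\<Sum>k<n. c k) = (1::real)}"

end

theory Submission
  imports Defs
begin

(* Enumerate F as h 0, ..., h (m - 1). Then conv F is the image of the compact coefficient simplex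
   under c \<mapsto> \<Sum>k. c k \<cdot> h k, so it suffices that this map is continuous into the Lawson topology.
   Since all h k are finite-valued (bounded by 1), every coordinate of \<Sum>k. c k \<cdot> h k depends
   continuously on c as a real number; hence preimages of complements of principal up-sets are open. A point
   \<nu> = \<Sum>k. c k \<cdot> h k is the directed supremum of its multiples t \<cdot> \<nu>, 0 < t < 1, so a Scott-open
   set containing \<nu> contains some t \<cdot> \<nu>; all coefficient vectors near c dominate t \<cdot> c, and
   Scott-open sets are upper sets. *)

lemma scott_open_carrier: "scott_open S le S"
  unfolding scott_open_def upper_set_on_def directed_on_def by blast

lemma scott_open_subset: "scott_open S le W \<Longrightarrow> W \<subseteq> S"
  unfolding scott_open_def upper_set_on_def by blast

lemma scott_open_upward: "scott_open S le W \<Longrightarrow> x \<in> W \<Longrightarrow> y \<in> S \<Longrightarrow> le x y \<Longrightarrow> y \<in> W"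
  unfolding scott_open_def upper_set_on_def by blast

lemma scott_open_inaccessible:
  "scott_open S le W \<Longrightarrow> directed_on S le D \<Longrightarrow> is_lub_on S le D s \<Longrightarrow> s \<in> W \<Longrightarrow> \<exists>d\<in>D. d \<in> W"
  unfolding scott_open_def by blast

lemma cont_valuation_outside: "cont_valuation S le \<mu> \<Longrightarrow> \<not> scott_open S le U \<Longrightarrow> \<mu> U = 0"
  by (simp add: cont_valuation_def)

lemma cont_valuation_empty: "cont_valuation S le \<mu> \<Longrightarrow> \<mu> {} = 0"
  by (simp add: cont_valuation_def)

lemma cont_valuation_mono:
  "cont_valuation S le \<mu> \<Longrightarrow> scott_open S le U \<Longrightarrow> scott_open S le V \<Longrightarrow> U \<subseteq> V \<Longrightarrow> \<mu> U \<le> \<mu> V"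
  by (simp add: cont_valuation_def)

lemma cont_valuation_modular:
  "cont_valuation S le \<mu> \<Longrightarrow> scott_open S le U \<Longrightarrow> scott_open S le V \<Longrightarrow>
     \<mu> U + \<mu> V = \<mu> (U \<union> V) + \<mu> (U \<inter> V)"
  by (simp add: cont_valuation_def)

lemma cont_valuation_directed_Union:
  "cont_valuation S le \<mu> \<Longrightarrow> \<D> \<noteq> {} \<Longrightarrow> \<forall>U\<in>\<D>. scott_open S le U \<Longrightarrow>
     \<forall>U\<in>\<D>. \<forall>V\<in>\<D>. \<exists>W\<in>\<D>. U \<subseteq> W \<and> V \<subseteq> W \<Longrightarrow> \<mu> (\<Union>\<D>) = (SUP U\<in>\<D>. \<mu> U)"
  unfolding cont_valuation_def by (elim conjE) (drule spec[of _ \<D>], erule mp, simp)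

lemma cont_valuation_zero: "cont_valuation S le (\<lambda>_. 0)"
  unfolding cont_valuation_def by simp

lemma cont_valuation_add:
  assumes \<mu>: "cont_valuation S le \<mu>" and \<nu>: "cont_valuation S le \<nu>"
  shows "cont_valuation S le (\<lambda>U. \<mu> U + \<nu> U)"
  unfolding cont_valuation_def
proof (intro conjI allI impI)
  fix U assume "\<not> scott_open S le U"
  then show "\<mu> U + \<nu> U = 0"
    by (simp add: cont_valuation_outside[OF \<mu>] cont_valuation_outside[OF \<nu>])
next
  show "\<mu> {} + \<nu> {} = 0"
    by (simp add: cont_valuation_empty[OF \<mu>] cont_valuation_empty[OF \<nu>])
next
  fix U V assume "scott_open S le U \<and> scott_open S le V \<and> U \<subseteq> V"
  then show "\<mu> U + \<nu> U \<le> \<mu> V + \<nu> V"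
    by (intro add_mono cont_valuation_mono[OF \<mu>] cont_valuation_mono[OF \<nu>]) auto
next
  fix U V assume "scott_open S le U \<and> scott_open S le V"
  then have modular: "\<mu> U + \<mu> V = \<mu> (U \<union> V) + \<mu> (U \<inter> V)"
      "\<nu> U + \<nu> V = \<nu> (U \<union> V) + \<nu> (U \<inter> V)"
    using cont_valuation_modular[OF \<mu>] cont_valuation_modular[OF \<nu>] by blast+
  have "\<mu> U + \<nu> U + (\<mu> V + \<nu> V) = (\<mu> U + \<mu> V) + (\<nu> U + \<nu> V)"
    by (simp add: ac_simps)
  also have "\<dots> = (\<mu> (U \<union> V) + \<mu> (U \<inter> V)) + (\<nu> (U \<union> V) + \<nu> (U \<inter> V))"
    by (simp only: modular)
  also have "\<dots> = \<mu> (U \<union> V) + \<nu> (U \<union> V) + (\<mu> (U \<inter> V) + \<nu> (U \<inter> V))"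
    by (simp add: ac_simps)
  finally show "\<mu> U + \<nu> U + (\<mu> V + \<nu> V) = \<mu> (U \<union> V) + \<nu> (U \<union> V) + (\<mu> (U \<inter> V) + \<nu> (U \<inter> V))" .
next
  fix \<D> assume \<D>: "\<D> \<noteq> {} \<and> (\<forall>U\<in>\<D>. scott_open S le U) \<and> (\<forall>U\<in>\<D>. \<forall>V\<in>\<D>. \<exists>W\<in>\<D>. U \<subseteq> W \<and> V \<subseteq> W)"
  have "(SUP U\<in>\<D>. \<mu> U + \<nu> U) = (SUP U\<in>\<D>. \<mu> U) + (SUP U\<in>\<D>. \<nu> U)"
  proof (rule SUP_add_directed_ennreal)
    fix U V assume "U \<in> \<D>" "V \<in> \<D>"
    then obtain W where "W \<in> \<D>" "U \<subseteq> W" "V \<subseteq> W" using \<D> by blast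
    moreover have "\<mu> U + \<nu> V \<le> \<mu> W + \<nu> W"
      using \<D> \<open>U \<in> \<D>\<close> \<open>V \<in> \<D>\<close> \<open>W \<in> \<D>\<close> \<open>U \<subseteq> W\<close> \<open>V \<subseteq> W\<close>
      by (intro add_mono cont_valuation_mono[OF \<mu>] cont_valuation_mono[OF \<nu>]) auto
    ultimately show "\<exists>W\<in>\<D>. \<mu> U + \<nu> V \<le> \<mu> W + \<nu> W"
      by blast
  qed
  then show "\<mu> (\<Union>\<D>) + \<nu> (\<Union>\<D>) = (SUP U\<in>\<D>. \<mu> U + \<nu> U)"
    using \<D> cont_valuation_directed_Union[OF \<mu>] cont_valuation_directed_Union[OF \<nu>] by simp
qed

lemma cont_valuation_cmult:
  assumes \<mu>: "cont_valuation S le \<mu>"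
  shows "cont_valuation S le (\<lambda>U. r * \<mu> U)"
  unfolding cont_valuation_def
proof (intro conjI allI impI)
  fix U V assume "scott_open S le U \<and> scott_open S le V"
  then show "r * \<mu> U + r * \<mu> V = r * \<mu> (U \<union> V) + r * \<mu> (U \<inter> V)"
    using cont_valuation_modular[OF \<mu>] by (simp flip: distrib_left)
next
  fix \<D> assume "\<D> \<noteq> {} \<and> (\<forall>U\<in>\<D>. scott_open S le U) \<and> (\<forall>U\<in>\<D>. \<forall>V\<in>\<D>. \<exists>W\<in>\<D>. U \<subseteq> W \<and> V \<subseteq> W)"
  then show "r * \<mu> (\<Union>\<D>) = (SUP U\<in>\<D>. r * \<mu> U)"
    using cont_valuation_directed_Union[OF \<mu>] by (simp add: SUP_mult_left_ennreal)
qed (use cont_valuation_outside[OF \<mu>] cont_valuation_empty[OF \<mu>] cont_valuation_mono[OF \<mu>]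
  in \<open>auto intro: mult_left_mono\<close>)

lemma cont_valuation_sum:
  assumes "\<And>k. k \<in> K \<Longrightarrow> cont_valuation S le (\<mu> k)"
  shows "cont_valuation S le (\<lambda>U. \<Sum>k\<in>K. r k * \<mu> k U)"
  using assms
proof (induction K rule: infinite_finite_induct)
  case (insert k K)
  then show ?case
    by (simp add: cont_valuation_add cont_valuation_cmult)
qed (simp_all add: cont_valuation_zero)

lemma prod_val_sum:
  assumes "\<And>k. k \<in> K \<Longrightarrow> h k \<in> prod_val I X R"
  shows "(\<lambda>i U. \<Sum>k\<in>K. r k * h k i U) \<in> prod_val I X R"
  using assms unfolding prod_val_def by (auto intro!: cont_valuation_sum)

lemma prod_val_le_total_mass:
  assumes "\<nu> \<in> prod_val I X R" "i \<in> I"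
  shows "\<nu> i U \<le> \<nu> i (X i)"
proof -
  have cv: "cont_valuation (X i) (R i) (\<nu> i)"
    using assms unfolding prod_val_def by blast
  show ?thesis
  proof (cases "scott_open (X i) (R i) U")
    case True
    then show ?thesis
      by (rule cont_valuation_mono[OF cv _ scott_open_carrier scott_open_subset[OF True]])
  qed (simp add: cont_valuation_outside[OF cv])
qed

lemma prod_val_less_top:
  assumes "\<nu> \<in> prod_val I X R" "\<And>i. i \<in> I \<Longrightarrow> \<nu> i (X i) < top"
  shows "\<nu> i U < top"
proof (cases "i \<in> I")
  case True
  then show ?thesis
    using prod_val_le_total_mass assms by (metis le_less_trans)
next
  case False
  then show ?thesis
    using assms(1) by (simp add: prod_val_def)
qed

lemma ennreal_le_of_scaled_le:
  fixes a b :: ennreal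
  assumes "\<And>t::real. 0 < t \<Longrightarrow> t < 1 \<Longrightarrow> ennreal t * a \<le> b"
  shows "a \<le> b"
proof (rule ennreal_approx_unit)
  fix s :: ennreal assume "0 < s" "s < 1"
  then obtain t where "s = ennreal t" "0 < t" "t < 1"
    by (cases s) (auto simp: ennreal_less_iff)
  then show "s * a \<le> b" using assms by simp
qed

lemma openin_ennreal_less:
  assumes g: "continuous_map T euclideanreal g" and nonneg: "\<And>x. x \<in> topspace T \<Longrightarrow> 0 \<le> g x"
  shows "openin T {x \<in> topspace T. ennreal (g x) < b}"
proof (cases "b = top")
  case True
  then show ?thesis
    by simp
next
  case False
  then obtain r where "b = ennreal r" "0 \<le> r"
    by (cases b) auto
  then have "{x \<in> topspace T. ennreal (g x) < b} = {x \<in> topspace T. g x \<in> {..<r}}"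
    using nonneg by (auto simp: ennreal_less_iff)
  then show ?thesis
    using openin_continuous_map_preimage[OF g, of "{..<r}"] by simp
qed

lemma continuous_map_lawson_topology:
  assumes into: "\<And>x. x \<in> topspace T \<Longrightarrow> f x \<in> S"
    and scott: "\<And>W. scott_open S le W \<Longrightarrow> openin T {x \<in> topspace T. f x \<in> W}"
    and not_up: "\<And>y. y \<in> S \<Longrightarrow> openin T {x \<in> topspace T. f x \<notin> up_on S le y}"
  shows "continuous_map T (lawson_topology S le) f"
  unfolding lawson_topology_def
proof (rule continuous_on_generated_topo)
  fix W assume "W \<in> {U. scott_open S le U} \<union> {S - up_on S le y |y. y \<in> S}"
  then consider "scott_open S le W" | y where "y \<in> S" "W = S - up_on S le y"
    by blast
  then show "openin T (f -` W \<inter> topspace T)"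
  proof cases
    case 1
    then show ?thesis
      using scott[of W] by (simp add: Int_commute vimage_def Collect_conj_eq)
  next
    case 2
    then have "f -` W \<inter> topspace T = {x \<in> topspace T. f x \<notin> up_on S le y}"
      using into by auto
    then show ?thesis
      using not_up[OF \<open>y \<in> S\<close>] by simp
  qed
next
  show "f ` topspace T \<subseteq> \<Union> ({U. scott_open S le U} \<union> {S - up_on S le y |y. y \<in> S})"
  proof (intro image_subsetI)
    fix x assume "x \<in> topspace T"
    then show "f x \<in> \<Union> ({U. scott_open S le U} \<union> {S - up_on S le y |y. y \<in> S})"
      by (intro UnionI[of S]) (simp_all add: scott_open_carrier into)
  qed
qed

definition val_scale :: "real \<Rightarrow> ('i \<Rightarrow> 'a set \<Rightarrow> ennreal) \<Rightarrow> 'i \<Rightarrow> 'a set \<Rightarrow> ennreal" where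
  "val_scale t \<nu> = (\<lambda>i U. ennreal t * \<nu> i U)"

lemma val_scale_one [simp]: "val_scale 1 \<nu> = \<nu>"
  by (simp add: val_scale_def)

lemma val_scale_in_prod_val: "\<nu> \<in> prod_val I X R \<Longrightarrow> val_scale t \<nu> \<in> prod_val I X R"
  using prod_val_sum[of "{()}" "\<lambda>_. \<nu>"] by (simp add: val_scale_def)

lemma prod_val_le_val_scale: "t \<le> t' \<Longrightarrow> prod_val_le (val_scale t \<nu>) (val_scale t' \<nu>)"
  unfolding prod_val_le_def val_scale_def by (simp add: mult_right_mono ennreal_leI)

lemma is_lub_on_val_scale:
  assumes "\<nu> \<in> prod_val I X R"
  shows "directed_on (prod_val I X R) prod_val_le ((\<lambda>t. val_scale t \<nu>) ` {0<..<1})"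
    and "is_lub_on (prod_val I X R) prod_val_le ((\<lambda>t. val_scale t \<nu>) ` {0<..<1}) \<nu>"
proof -
  show "directed_on (prod_val I X R) prod_val_le ((\<lambda>t. val_scale t \<nu>) ` {0<..<1})"
    unfolding directed_on_def
  proof (intro conjI ballI)
    show "(\<lambda>t. val_scale t \<nu>) ` {0<..<1} \<noteq> {}"
      by simp
    show "(\<lambda>t. val_scale t \<nu>) ` {0<..<1} \<subseteq> prod_val I X R"
      using val_scale_in_prod_val[OF assms] by blast
    fix x y assume "x \<in> (\<lambda>t. val_scale t \<nu>) ` {0<..<1}" "y \<in> (\<lambda>t. val_scale t \<nu>) ` {0<..<1}"
    then obtain s t where st: "s \<in> {0<..<1}" "t \<in> {0<..<1}" and "x = val_scale s \<nu>" "y = val_scale t \<nu>"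
      by blast
    then have "prod_val_le x (val_scale (max s t) \<nu>)" "prod_val_le y (val_scale (max s t) \<nu>)"
      by (simp_all add: prod_val_le_val_scale)
    moreover have "val_scale (max s t) \<nu> \<in> (\<lambda>t. val_scale t \<nu>) ` {0<..<1}"
      using st by (intro image_eqI[where x = "max s t"]) auto
    ultimately show "\<exists>z\<in>(\<lambda>t. val_scale t \<nu>) ` {0<..<1}. prod_val_le x z \<and> prod_val_le y z"
      by blast
  qed
  show "is_lub_on (prod_val I X R) prod_val_le ((\<lambda>t. val_scale t \<nu>) ` {0<..<1}) \<nu>"
    unfolding is_lub_on_def
  proof (intro conjI ballI impI assms)
    fix d assume "d \<in> (\<lambda>t. val_scale t \<nu>) ` {0<..<1}"
    then obtain t where "t < 1" "d = val_scale t \<nu>"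
      by auto
    then show "prod_val_le d \<nu>"
      using prod_val_le_val_scale[of t 1 \<nu>] by simp
  next
    fix \<mu> assume upper: "\<forall>d\<in>(\<lambda>t. val_scale t \<nu>) ` {0<..<1}. prod_val_le d \<mu>"
    have "ennreal t * \<nu> i U \<le> \<mu> i U" if "0 < t" "t < 1" for t i U
    proof -
      have "prod_val_le (val_scale t \<nu>) \<mu>"
        using upper that by simp
      then show ?thesis
        unfolding prod_val_le_def val_scale_def by blast
    qed
    then show "prod_val_le \<nu> \<mu>"
      unfolding prod_val_le_def by (blast intro: ennreal_le_of_scaled_le)
  qed
qed

lemma scott_open_contains_val_scale:
  assumes "scott_open (prod_val I X R) prod_val_le W" "\<nu> \<in> W"
  obtains t where "0 < t" "t < 1" "val_scale t \<nu> \<in> W"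
proof -
  have "\<nu> \<in> prod_val I X R"
    using scott_open_subset[OF assms(1)] assms(2) by blast
  then obtain d where "d \<in> (\<lambda>t. val_scale t \<nu>) ` {0<..<1}" "d \<in> W"
    using scott_open_inaccessible[OF assms(1) is_lub_on_val_scale assms(2)] by blast
  then show ?thesis
    using that by auto
qed

definition std_simplex :: "nat \<Rightarrow> (nat \<Rightarrow> real) set" where
  "std_simplex m = {c. (\<forall>k. 0 \<le> c k \<and> c k \<le> 1) \<and> (\<forall>k\<ge>m. c k = 0) \<and> (\<Sum>k<m. c k) = 1}"

lemma compactin_std_simplex: "compactin (powertop_real UNIV) (std_simplex m)"
proof (rule closed_compactin)
  show "compactin (powertop_real UNIV) (UNIV \<rightarrow>\<^sub>E {0..1})"
    by (simp add: compactin_PiE)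
  show "std_simplex m \<subseteq> UNIV \<rightarrow>\<^sub>E {0..1}"
    by (auto simp: std_simplex_def)
  have closed_coord: "closedin (powertop_real UNIV) {c. c k \<in> A}" if "closed A" for k A
    using closedin_continuous_map_preimage[OF continuous_map_product_projection[of k UNIV "\<lambda>_. euclideanreal"], of A] that
    by simp
  have sum_cont: "continuous_map (powertop_real UNIV) euclideanreal (\<lambda>c. \<Sum>k<m. c k)"
    by (intro continuous_map_sum continuous_map_product_projection) auto
  have "closedin (powertop_real UNIV) {c. (\<Sum>k<m. c k) \<in> {1}}"
    using closedin_continuous_map_preimage[OF sum_cont, of "{1}"] by simp
  moreover have "closedin (powertop_real UNIV) (\<Inter>k. {c. c k \<in> {0..1}})"
    by (rule closedin_Inter) (blast intro: closed_coord closed_atLeastAtMost)+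
  moreover have "closedin (powertop_real UNIV) (\<Inter>k\<in>{m..}. {c. c k \<in> {0}})"
    by (rule closedin_Inter) (blast intro: closed_coord closed_singleton atLeast_iff[THEN iffD2])+
  moreover have "std_simplex m =
      (\<Inter>k. {c. c k \<in> {0..1}}) \<inter> (\<Inter>k\<in>{m..}. {c. c k \<in> {0}}) \<inter> {c. (\<Sum>k<m. c k) \<in> {1}}"
    unfolding std_simplex_def by (simp add: set_eq_iff) (meson atLeast_iff)
  ultimately show "closedin (powertop_real UNIV) (std_simplex m)"
    by (metis closedin_Int)
qed

definition val_comb :: "(nat \<Rightarrow> 'i \<Rightarrow> 'a set \<Rightarrow> ennreal) \<Rightarrow> nat \<Rightarrow> (nat \<Rightarrow> real) \<Rightarrow> 'i \<Rightarrow> 'a set \<Rightarrow> ennreal"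
  where "val_comb h m c = (\<lambda>i U. \<Sum>k<m. ennreal (c k) * h k i U)"

lemma val_comb_in_prod_val: "(\<And>k. k < m \<Longrightarrow> h k \<in> prod_val I X R) \<Longrightarrow> val_comb h m c \<in> prod_val I X R"
  unfolding val_comb_def by (rule prod_val_sum) simp

lemma prod_val_le_val_comb:
  "(\<And>k. k < m \<Longrightarrow> a k \<le> b k) \<Longrightarrow> prod_val_le (val_comb h m a) (val_comb h m b)"
  unfolding prod_val_le_def val_comb_def by (auto intro!: sum_mono mult_right_mono ennreal_leI)

lemma val_comb_scale: "0 \<le> t \<Longrightarrow> val_comb h m (\<lambda>k. t * c k) = val_scale t (val_comb h m c)"
  unfolding val_comb_def val_scale_def by (simp add: ennreal_mult' sum_distrib_left mult.assoc)

lemma val_comb_eq_ennreal: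
  assumes "\<And>k. 0 \<le> c k" "\<And>k. k < m \<Longrightarrow> h k i U < top"
  shows "val_comb h m c i U = ennreal (\<Sum>k<m. c k * enn2real (h k i U))"
proof -
  have "ennreal (c k) * h k i U = ennreal (c k * enn2real (h k i U))" if "k < m" for k
    using assms(1) assms(2)[OF that] by (simp add: ennreal_mult ennreal_enn2real_if)
  then show ?thesis
    unfolding val_comb_def using assms(1) by (simp add: sum_ennreal)
qed

lemma val_comb_image_subset_conv_hull_val:
  assumes "\<And>k. k < m \<Longrightarrow> h k \<in> F"
  shows "val_comb h m ` std_simplex m \<subseteq> conv_hull_val F"
proof
  fix y assume "y \<in> val_comb h m ` std_simplex m"
  then obtain c where "c \<in> std_simplex m" "y = val_comb h m c"
    by blast
  then have "y = (\<lambda>i U. \<Sum>k<m. ennreal (c k) * h k i U) \<and> (\<forall>k<m. h k \<in> F \<and> c k \<ge> 0) \<and> (\<Sum>k<m. c k) = 1"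
    using assms by (simp add: val_comb_def std_simplex_def)
  then show "y \<in> conv_hull_val F"
    unfolding conv_hull_val_def by blast
qed

lemma conv_hull_val_subset_val_comb_image:
  assumes h: "bij_betw h {..<m} F"
  shows "conv_hull_val F \<subseteq> val_comb h m ` std_simplex m"
proof
  fix y assume "y \<in> conv_hull_val F"
  then obtain n :: nat and c :: "nat \<Rightarrow> real" and g where y: "y = (\<lambda>i U. \<Sum>j<n. ennreal (c j) * g j i U)"
    and gc: "\<forall>j<n. g j \<in> F \<and> 0 \<le> c j" and sum_c: "(\<Sum>j<n. c j) = 1"
    unfolding conv_hull_val_def by fastforce
  have g: "g j \<in> F" and c: "0 \<le> c j" if "j < n" for j
    using gc that by auto
  define idx where "idx j = inv_into {..<m} h (g j)" for j
  have idx: "idx j < m" "h (idx j) = g j" if "j < n" for j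
    using g[OF that] bij_betw_inv_into_right[OF h] bij_betw_apply[OF bij_betw_inv_into[OF h]]
    unfolding idx_def by auto
  define d where "d k = (\<Sum>j\<in>{j\<in>{..<n}. idx j = k}. c j)" for k
  have regroup: "(\<Sum>k<m. \<Sum>j\<in>{j\<in>{..<n}. idx j = k}. f j) = (\<Sum>j<n. f j)"
    for f :: "nat \<Rightarrow> 'z::comm_monoid_add"
    by (rule sum.group) (auto simp: idx)
  have "d \<in> std_simplex m"
    unfolding std_simplex_def
  proof (intro CollectI conjI allI impI)
    fix k
    show "0 \<le> d k"
      unfolding d_def using c by (auto intro: sum_nonneg)
    have "d k \<le> (\<Sum>j<n. c j)"
      unfolding d_def using c by (intro sum_mono2) auto
    then show "d k \<le> 1"
      using sum_c by simp
    show "d k = 0" if "m \<le> k"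
      unfolding d_def using that by (intro sum.neutral) (auto dest: idx(1))
  next
    show "(\<Sum>k<m. d k) = 1"
      unfolding d_def using regroup[of c] sum_c by simp
  qed
  moreover have "y = val_comb h m d"
  proof (intro ext)
    fix i U
    have "ennreal (d k) = (\<Sum>j\<in>{j\<in>{..<n}. idx j = k}. ennreal (c j))" for k
      unfolding d_def by (rule sum_ennreal[symmetric]) (simp add: c)
    then have "val_comb h m d i U = (\<Sum>k<m. \<Sum>j\<in>{j\<in>{..<n}. idx j = k}. ennreal (c j) * h k i U)"
      unfolding val_comb_def by (simp add: sum_distrib_right)
    also have "\<dots> = (\<Sum>k<m. \<Sum>j\<in>{j\<in>{..<n}. idx j = k}. ennreal (c j) * g j i U)"
      using idx by (intro sum.cong refl) auto
    also have "\<dots> = y i U"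
      unfolding y by (rule regroup)
    finally show "y i U = val_comb h m d i U"
      by simp
  qed
  ultimately show "y \<in> val_comb h m ` std_simplex m"
    by blast
qed

lemma conv_hull_val_eq_val_comb_image:
  assumes "bij_betw h {..<m} F"
  shows "conv_hull_val F = val_comb h m ` std_simplex m"
proof (rule subset_antisym)
  show "conv_hull_val F \<subseteq> val_comb h m ` std_simplex m"
    using assms by (rule conv_hull_val_subset_val_comb_image)
  show "val_comb h m ` std_simplex m \<subseteq> conv_hull_val F"
    using bij_betw_apply[OF assms] by (intro val_comb_image_subset_conv_hull_val) simp
qed

lemma openin_val_comb_preimage_scott_open:
  assumes h: "\<And>k. k < m \<Longrightarrow> h k \<in> prod_val I X R"
    and W: "scott_open (prod_val I X R) prod_val_le W"
  shows "openin (subtopology (powertop_real UNIV) (std_simplex m)) {c \<in> std_simplex m. val_comb h m c \<in> W}"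
proof (subst openin_subopen, intro ballI)
  fix c assume "c \<in> {c \<in> std_simplex m. val_comb h m c \<in> W}"
  then have c: "c \<in> std_simplex m" "val_comb h m c \<in> W"
    by auto
  then have c0: "0 \<le> c k" for k
    by (simp add: std_simplex_def)
  obtain t where t: "0 < t" "t < 1" "val_scale t (val_comb h m c) \<in> W"
    using scott_open_contains_val_scale[OF W c(2)] .
  then have tc: "val_comb h m (\<lambda>k. t * c k) \<in> W"
    by (simp add: val_comb_scale)
  define K where "K = {k. k < m \<and> 0 < c k}"
  define V where "V = {x. \<forall>k\<in>K. t * c k < x k}"
  have V_eq: "V = (\<Inter>k\<in>K. {x. x k \<in> {t * c k<..}}) \<inter> topspace (powertop_real UNIV)"
    by (auto simp: V_def)
  have coord_open: "openin (powertop_real UNIV) {x. x k \<in> {t * c k<..}}" for k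
    using openin_continuous_map_preimage[OF continuous_map_product_projection[of k UNIV "\<lambda>_. euclideanreal"],
        of "{t * c k<..}"]
    by simp
  have "openin (powertop_real UNIV) V"
    unfolding V_eq by (intro openin_INT coord_open) (simp add: K_def)
  then have "openin (subtopology (powertop_real UNIV) (std_simplex m)) (V \<inter> std_simplex m)"
    by (auto simp: openin_subtopology)
  moreover have "c \<in> V \<inter> std_simplex m"
    using c t by (auto simp: V_def K_def)
  moreover have "V \<inter> std_simplex m \<subseteq> {c \<in> std_simplex m. val_comb h m c \<in> W}"
  proof
    fix x assume x: "x \<in> V \<inter> std_simplex m"
    have "t * c k \<le> x k" if "k < m" for k
    proof (cases "0 < c k")
      case True
      then show ?thesis using x that by (auto simp: V_def K_def)
    next
      case False
      then show ?thesis using c0[of k] x by (auto simp: std_simplex_def)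
    qed
    then have "prod_val_le (val_comb h m (\<lambda>k. t * c k)) (val_comb h m x)"
      by (rule prod_val_le_val_comb)
    then show "x \<in> {c \<in> std_simplex m. val_comb h m c \<in> W}"
      using scott_open_upward[OF W tc val_comb_in_prod_val] h x by blast
  qed
  ultimately show "\<exists>V. openin (subtopology (powertop_real UNIV) (std_simplex m)) V \<and> c \<in> V \<and>
      V \<subseteq> {c \<in> std_simplex m. val_comb h m c \<in> W}"
    by blast
qed

lemma openin_val_comb_preimage_not_up:
  assumes h: "\<And>k. k < m \<Longrightarrow> h k \<in> prod_val I X R" and fin: "\<And>k i U. k < m \<Longrightarrow> h k i U < top"
  shows "openin (subtopology (powertop_real UNIV) (std_simplex m))
           {c \<in> std_simplex m. val_comb h m c \<notin> up_on (prod_val I X R) prod_val_le \<nu>}"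
proof -
  let ?T = "subtopology (powertop_real UNIV) (std_simplex m)"
  define r where "r i U c = (\<Sum>k<m. c k * enn2real (h k i U))" for i U and c :: "nat \<Rightarrow> real"
  have "val_comb h m c \<notin> up_on (prod_val I X R) prod_val_le \<nu> \<longleftrightarrow> (\<exists>i U. ennreal (r i U c) < \<nu> i U)"
    if "c \<in> std_simplex m" for c
  proof -
    have "val_comb h m c i U = ennreal (r i U c)" for i U
      using that fin unfolding r_def by (intro val_comb_eq_ennreal) (auto simp: std_simplex_def)
    then show ?thesis
      using val_comb_in_prod_val[of m h] h
      by (auto simp: up_on_def prod_val_le_def not_le)
  qed
  then have "{c \<in> std_simplex m. val_comb h m c \<notin> up_on (prod_val I X R) prod_val_le \<nu>} =
      (\<Union>i. \<Union>U. {c \<in> topspace ?T. ennreal (r i U c) < \<nu> i U})"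
    by auto
  moreover have "openin ?T {c \<in> topspace ?T. ennreal (r i U c) < \<nu> i U}" for i U
  proof (rule openin_ennreal_less)
    show "continuous_map ?T euclideanreal (r i U)"
      unfolding r_def
      by (intro continuous_map_sum continuous_map_real_mult_right continuous_map_from_subtopology
          continuous_map_product_projection) auto
    show "0 \<le> r i U c" if "c \<in> topspace ?T" for c
      using that unfolding r_def by (auto simp: std_simplex_def intro!: sum_nonneg)
  qed
  ultimately show ?thesis
    by (auto intro!: openin_Union)
qed

lemma continuous_map_val_comb:
  assumes h: "\<And>k. k < m \<Longrightarrow> h k \<in> prod_val I X R" and fin: "\<And>k i U. k < m \<Longrightarrow> h k i U < top"
  shows "continuous_map (subtopology (powertop_real UNIV) (std_simplex m))
           (lawson_topology (prod_val I X R) prod_val_le) (val_comb h m)"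
  by (rule continuous_map_lawson_topology)
    (simp_all add: val_comb_in_prod_val h openin_val_comb_preimage_scott_open[OF h]
      openin_val_comb_preimage_not_up[OF h fin])

theorem mainTheorem15:
  fixes I :: "'i set" and X :: "'i \<Rightarrow> 'a set" and R :: "'i \<Rightarrow> 'a \<Rightarrow> 'a \<Rightarrow> bool"
    and F :: "('i \<Rightarrow> 'a set \<Rightarrow> ennreal) set"
  assumes dom: "\<forall>i\<in>I. domain_on (X i) (R i)"
    and coh: "\<forall>i\<in>I. coherent_top (scott_topology (X i) (R i))"
    and zd: "\<forall>i\<in>I. zero_dimensional_top (scott_topology (X i) (R i))"
    and finF: "finite F"
    and FV: "F \<subseteq> prod_val I X R"
    and F1: "\<forall>\<nu>\<in>F. \<forall>i\<in>I. \<nu> i (X i) \<le> 1"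
  shows "compactin (lawson_topology (prod_val I X R) prod_val_le) (conv_hull_val F)"
proof -
  obtain h where h: "bij_betw h {..<card F} F"
    using ex_bij_betw_nat_finite[OF finF] by (auto simp: atLeast0LessThan)
  then have hF: "h k \<in> F" if "k < card F" for k
    using bij_betw_apply[OF h] that by simp
  then have hP: "h k \<in> prod_val I X R" if "k < card F" for k
    using that FV by blast
  have fin: "h k i U < top" if "k < card F" for k i U
  proof (rule prod_val_less_top[OF hP[OF that]])
    fix i assume "i \<in> I"
    then have "h k i (X i) \<le> 1"
      using F1 hF[OF that] by blast
    then show "h k i (X i) < top"
      by (rule le_less_trans) simp
  qed
  have "compactin (subtopology (powertop_real UNIV) (std_simplex (card F))) (std_simplex (card F))"
    by (simp add: compactin_subtopology compactin_std_simplex)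
  then have "compactin (lawson_topology (prod_val I X R) prod_val_le)
      (val_comb h (card F) ` std_simplex (card F))"
    by (rule image_compactin) (rule continuous_map_val_comb[OF hP fin])
  then show ?thesis
    by (simp add: conv_hull_val_eq_val_comb_image[OF h])
qed

end
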